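(* Let $f:(0,\infty)\to(0,\infty)$ be non-increasing, let $a\ge0$, $b>0$, $c>0$, and define \[ F(r):=\int_0^\infty t^{-a}e^{-b^2t}e^{-\frac{r^2}{c^2t}}f(t)\,dt,\qquad r>0. \] If $t\mapsto t^2f(t)$ is non-decreasing, then \[ F(r)\asymp r^{-a+\frac12}\,f\!\left(\tfrac{r}{bc}\right)e^{-2bc^{-1}r}\quad\text{for all } r\ge1. \]
   Context: $g(r)\asymp h(r)$ for $r\in I$ means that $g(r)/h(r)$ stays between two positive constants (depending on $a,b,c,f$ but not on $r$) for all $r\in I$. *)

theory Defs
  imports "HOL-Analysis.Analysis"
begin

definition integrandA1 :: "real \<Rightarrow> real \<Rightarrow> real \<Rightarrow> (real \<Rightarrow> real) \<Rightarrow> real \<Rightarrow> real \<Rightarrow> real" where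
  "integrandA1 a b c f r t =
     t powr (-a) * exp (- (b\<^sup>2 * t)) * exp (- (r\<^sup>2 / (c\<^sup>2 * t))) * f t"

definition FA1 :: "real \<Rightarrow> real \<Rightarrow> real \<Rightarrow> (real \<Rightarrow> real) \<Rightarrow> real \<Rightarrow> real" where
  "FA1 a b c f r = (LBINT t:{0<..}. integrandA1 a b c f r t)"

end

theory Submission
  imports Defs "HOL-Real_Asymp.Real_Asymp"
begin

text \<open>Completing the square, b^2 t + r^2/(c^2 t) = 2br/c + b^2 (t - s)^2/t with s = r/(bc),
  so F(r) = exp(-2br/c) G(s) with G(s) the integral of t^(-a) f(t) exp(-b^2 (t - s)^2/t), and it
  remains to show G(s) \<asymp> s^(1/2 - a) f(s) when b^2 s is bounded below. The monotonicity
  hypotheses give f(t) \<le> f(s) min(1, s^2/t^2). For the upper bound the remaining integrand is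
  dominated by K s^(1/2 - a) times the derivative of t \<mapsto> arctan(b(t - s)/sqrt t)/b, whose total
  integral is pi/b; after substituting t = us this amounts to the Gaussian factor beating a
  polynomial in u + 1/u = 2 + (t - s)^2/(ts). For the lower bound one integrates only over
  [s, s + sqrt s/b], where the Gaussian factor is at least 1/e and t is comparable to s.\<close>

lemma one_plus_power_mult_exp_le:
  fixes x :: real assumes "0 \<le> x"
  shows "(1 + x) ^ n * exp (-x) \<le> real n ^ n"
proof (cases "n = 0")
  case False
  have "(1 + x) ^ n \<le> (real n * (1 + x / real n)) ^ n"
    using assms False by (intro power_mono) (auto simp: field_simps)
  also have "\<dots> = real n ^ n * (1 + x / real n) ^ n" by (simp add: power_mult_distrib)
  also have "\<dots> \<le> real n ^ n * exp x"
    using assms False by (intro mult_left_mono exp_ge_one_plus_x_over_n_power_n) auto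
  finally show ?thesis by (simp add: exp_minus field_simps)
qed (simp add: assms)

text \<open>The factors of the domination bound after the substitution t = us.\<close>

lemma rescaled_weight_le:
  fixes u a :: real
  assumes u: "0 < u" and a: "0 \<le> a" "a \<le> real N"
  shows "u powr (-a) * (if 1 \<le> u then 1 else 1 / u\<^sup>2) * (2 * u * sqrt u / (u + 1))
    \<le> 2 * (u + 1 / u) ^ (N + 2)"
proof (cases "1 \<le> u")
  case True
  have pw: "u powr (-a) \<le> 1" using True a by (simp add: powr_minus divide_simps ge_one_powr_ge_zero)
  have q: "2 * u * sqrt u / (u + 1) \<le> 2 * u"
  proof -
    have "sqrt u \<le> u" using True by (intro real_le_lsqrt) (auto simp: power2_eq_square)
    then show ?thesis using u by (simp add: divide_simps)
  qed
  have base: "1 \<le> u + 1 / u" using True u by (simp add: add_increasing2)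
  have "u powr (-a) * (2 * u * sqrt u / (u + 1)) \<le> 1 * (2 * u)"
    using pw q u by (intro mult_mono) auto
  also have "\<dots> \<le> 2 * (u + 1 / u)" using u by simp
  also have "\<dots> \<le> 2 * (u + 1 / u) ^ (N + 2)" using base by (intro mult_left_mono self_le_power) auto
  finally show ?thesis using True by simp
next
  case False
  define v where "v = 1 / u"
  have v: "1 < v" using False u by (simp add: v_def)
  have "u powr (-a) = v powr a" using u by (simp add: v_def powr_minus_divide powr_divide)
  also have "\<dots> \<le> v ^ N" using v a by (subst powr_realpow[symmetric]) (auto intro!: powr_mono)
  finally have pw: "u powr (-a) \<le> v ^ N" .
  have q: "2 * u * sqrt u / (u + 1) \<le> 2"
  proof -
    have "u * sqrt u \<le> 1" using False u by (intro mult_le_one) auto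
    then show ?thesis using u by (simp add: divide_simps)
  qed
  have "u powr (-a) * (1 / u\<^sup>2) * (2 * u * sqrt u / (u + 1)) \<le> v ^ N * v\<^sup>2 * 2"
    using pw q u by (intro mult_mono) (auto simp: v_def power_divide)
  also have "\<dots> = 2 * v ^ (N + 2)" by (simp add: power_add power2_eq_square)
  also have "\<dots> \<le> 2 * (u + 1 / u) ^ (N + 2)" using u v by (intro mult_left_mono power_mono) (auto simp: v_def)
  finally show ?thesis using False by simp
qed

lemma rescaled_weight_mult_exp_le:
  fixes u a l L :: real
  assumes u: "0 < u" and a: "0 \<le> a" and L: "0 < L" and l: "L \<le> l"
  defines "x \<equiv> l * (u - 1)\<^sup>2 / u"
  shows "u powr (-a) * (if 1 \<le> u then 1 else 1 / u\<^sup>2) * (2 * u * sqrt u / (u + 1)) * ((1 + x) * exp (-x))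
    \<le> 2 * max 2 (1 / L) ^ (nat \<lceil>a\<rceil> + 2) * real (nat \<lceil>a\<rceil> + 3) ^ (nat \<lceil>a\<rceil> + 3)"
proof -
  define N where "N = nat \<lceil>a\<rceil>"
  define M where "M = max 2 (1 / L)"
  have M: "2 \<le> M" "1 / L \<le> M" by (simp_all add: M_def)
  have x: "0 \<le> x" using u L l by (simp add: x_def)
  have "u + 1 / u = 2 + x / l"
    using u L l by (simp add: x_def field_simps power2_eq_square)
  also have "\<dots> \<le> M * (1 + x)"
  proof -
    have "x / l \<le> x / L" using x l L by (intro divide_left_mono) auto
    also have "\<dots> \<le> M * x" using mult_right_mono[OF M(2) x] by simp
    finally show ?thesis using M(1) by (simp add: algebra_simps)
  qed
  finally have "(u + 1 / u) ^ (N + 2) \<le> (M * (1 + x)) ^ (N + 2)"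
    using u by (intro power_mono) auto
  moreover have "a \<le> real N" unfolding N_def by linarith
  ultimately have "u powr (-a) * (if 1 \<le> u then 1 else 1 / u\<^sup>2) * (2 * u * sqrt u / (u + 1))
      \<le> 2 * (M * (1 + x)) ^ (N + 2)"
    using rescaled_weight_le[OF u a] by fastforce
  then have "u powr (-a) * (if 1 \<le> u then 1 else 1 / u\<^sup>2) * (2 * u * sqrt u / (u + 1)) * ((1 + x) * exp (-x))
      \<le> 2 * (M * (1 + x)) ^ (N + 2) * ((1 + x) * exp (-x))"
    using x by (intro mult_right_mono) auto
  also have "\<dots> = 2 * M ^ (N + 2) * ((1 + x) ^ (N + 3) * exp (-x))"
    by (simp add: power_mult_distrib numeral_3_eq_3)
  also have "\<dots> \<le> 2 * M ^ (N + 2) * real (N + 3) ^ (N + 3)"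
    using one_plus_power_mult_exp_le[OF x, of "N + 3"] M by (intro mult_left_mono) auto
  finally show ?thesis by (simp add: M_def N_def)
qed

lemma powr_half_minus_eq:
  fixes s a :: real
  assumes "0 < s"
  shows "s powr (1/2 - a) = sqrt s * s powr (-a)"
  using assms by (simp add: powr_diff powr_half_sqrt powr_minus_divide)

definition arctan_kernel :: "real \<Rightarrow> real \<Rightarrow> real \<Rightarrow> real" where
  "arctan_kernel b s t = (t + s) / (2 * t * sqrt t * (1 + b\<^sup>2 * (t - s)\<^sup>2 / t))"

lemma arctan_kernel_has_real_derivative:
  assumes b: "0 < b" and t: "0 < t"
  shows "((\<lambda>t. arctan (b * (t - s) / sqrt t) / b) has_real_derivative arctan_kernel b s t) (at t)"
proof -
  have "((\<lambda>t. b * (t - s) / sqrt t) has_real_derivative b * ((t + s) / (2 * t * sqrt t))) (at t)"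
    using t by (auto intro!: derivative_eq_intros simp: field_simps)
  from DERIV_chain2[OF DERIV_arctan this]
  have deriv: "((\<lambda>t. arctan (b * (t - s) / sqrt t) / b) has_real_derivative
      inverse (1 + (b * (t - s) / sqrt t)\<^sup>2) * (b * ((t + s) / (2 * t * sqrt t))) / b) (at t)"
    by (rule DERIV_cdivide)
  have sq: "(b * (t - s) / sqrt t)\<^sup>2 = b\<^sup>2 * (t - s)\<^sup>2 / t"
    using t by (simp add: power_mult_distrib power_divide)
  have cancel: "inverse (1 + y) * (b * X) / b = X / (1 + y)" for X y :: real
    using b by (simp add: divide_inverse)
  show ?thesis
    using deriv unfolding sq cancel arctan_kernel_def divide_divide_eq_left .
qed

lemma arctan_kernel_nonneg: "0 < b \<Longrightarrow> 0 < s \<Longrightarrow> 0 < t \<Longrightarrow> 0 \<le> arctan_kernel b s t"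
  unfolding arctan_kernel_def by (auto intro!: divide_nonneg_pos mult_pos_pos add_pos_nonneg)

lemma arctan_kernel_integral:
  assumes b: "0 < b" and s: "0 < s"
  shows "set_integrable lborel {0<..} (arctan_kernel b s)"
    and "(LBINT t:{0<..}. arctan_kernel b s t) = pi / b"
proof -
  have lim0: "((\<lambda>t. arctan (b * (t - s) / sqrt t) / b) \<longlongrightarrow> - (pi / 2) / b) (at_right 0)"
  proof -
    have "filterlim (\<lambda>t. b * (t - s) / sqrt t) at_bot (at_right 0)" using b s by real_asymp
    then have "((\<lambda>t. arctan (b * (t - s) / sqrt t)) \<longlongrightarrow> - (pi / 2)) (at_right 0)"
      by (rule filterlim_compose[OF tendsto_arctan_at_bot])
    then show ?thesis by (intro tendsto_divide tendsto_const) (use b in auto)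
  qed
  have lim_top: "((\<lambda>t. arctan (b * (t - s) / sqrt t) / b) \<longlongrightarrow> (pi / 2) / b) at_top"
  proof -
    have "filterlim (\<lambda>t. b * (t - s) / sqrt t) at_top at_top" using b s by real_asymp
    then have "((\<lambda>t. arctan (b * (t - s) / sqrt t)) \<longlongrightarrow> pi / 2) at_top"
      by (rule filterlim_compose[OF tendsto_arctan_at_top])
    then show ?thesis by (intro tendsto_divide tendsto_const) (use b in auto)
  qed
  have cont: "isCont (arctan_kernel b s) t" if "0 < t" for t
  proof -
    have "0 < 1 + b\<^sup>2 * (t - s)\<^sup>2 / t" using that by (simp add: add_pos_nonneg)
    then show ?thesis
      unfolding arctan_kernel_def using that b by (auto intro!: continuous_intros)
  qed
  have "set_integrable lborel (einterval (ereal 0) \<infinity>) (arctan_kernel b s) \<and>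
      (LBINT t=ereal 0..\<infinity>. arctan_kernel b s t) = pi / 2 / b - - (pi / 2) / b"
    using b s lim0 lim_top
    by (intro conjI interval_integral_FTC_nonneg[where a = "ereal 0" and b = \<infinity>
          and F = "\<lambda>t. arctan (b * (t - s) / sqrt t) / b" and A = "- (pi / 2) / b" and B = "pi / 2 / b"])
      (auto intro!: arctan_kernel_has_real_derivative cont arctan_kernel_nonneg simp: ereal_tendsto_simps)
  then show "set_integrable lborel {0<..} (arctan_kernel b s)"
    and "(LBINT t:{0<..}. arctan_kernel b s t) = pi / b"
    by (simp_all add: interval_lebesgue_integral_def field_simps)
qed

lemma gauss_factor_le_arctan_kernel:
  fixes a b L :: real
  assumes a: "0 \<le> a" and b: "0 < b" and L: "0 < L"
  obtains K where "0 < K" and "\<And>s t. 0 < s \<Longrightarrow> 0 < t \<Longrightarrow> L \<le> b\<^sup>2 * s \<Longrightarrow>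
    t powr (-a) * (if s \<le> t then 1 else s\<^sup>2 / t\<^sup>2) * exp (- (b\<^sup>2 * (t - s)\<^sup>2 / t))
      \<le> K * s powr (1/2 - a) * arctan_kernel b s t"
proof
  define K where "K = 2 * max 2 (1 / L) ^ (nat \<lceil>a\<rceil> + 2) * real (nat \<lceil>a\<rceil> + 3) ^ (nat \<lceil>a\<rceil> + 3)"
  show "0 < K" by (simp add: K_def)
  fix s t :: real
  assume s: "0 < s" and t: "0 < t" and l: "L \<le> b\<^sup>2 * s"
  define u where "u = t / s"
  define x where "x = b\<^sup>2 * (t - s)\<^sup>2 / t"
  define Q where "Q = 2 * u * sqrt u / (u + 1)"
  have u: "0 < u" and x: "0 \<le> x" using s t by (simp_all add: u_def x_def)
  have Q: "0 < Q" using u by (simp add: Q_def)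
  have "b\<^sup>2 * s * (u - 1)\<^sup>2 / u = x"
    using s t by (simp add: u_def x_def field_simps power2_eq_square)
  then have "u powr (-a) * (if 1 \<le> u then 1 else 1 / u\<^sup>2) * Q * ((1 + x) * exp (-x)) \<le> K"
    using rescaled_weight_mult_exp_le[OF u a L l] unfolding K_def Q_def by simp
  then have "u powr (-a) * (if 1 \<le> u then 1 else 1 / u\<^sup>2) * exp (-x) * ((1 + x) * Q) \<le> K"
    by (simp only: mult_ac)
  then have bound: "u powr (-a) * (if 1 \<le> u then 1 else 1 / u\<^sup>2) * exp (-x) \<le> K / ((1 + x) * Q)"
    using Q x by (simp add: pos_le_divide_eq)
  have m: "(if s \<le> t then 1 else s\<^sup>2 / t\<^sup>2) = (if 1 \<le> u then 1 else 1 / u\<^sup>2)"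
    using s by (simp add: u_def power_divide)
  have tu: "t powr (-a) = s powr (-a) * u powr (-a)" using s u by (simp add: u_def powr_mult[symmetric])
  have kernel: "s powr (1/2 - a) * arctan_kernel b s t = s powr (-a) / ((1 + x) * Q)"
    using s u x powr_half_minus_eq[OF s, of a] unfolding arctan_kernel_def x_def[symmetric] Q_def
    by (simp add: u_def real_sqrt_divide field_simps)
  have "t powr (-a) * (if s \<le> t then 1 else s\<^sup>2 / t\<^sup>2) * exp (- (b\<^sup>2 * (t - s)\<^sup>2 / t))
      = s powr (-a) * (u powr (-a) * (if 1 \<le> u then 1 else 1 / u\<^sup>2) * exp (-x))"
    unfolding tu m x_def by (simp add: ac_simps)
  also have "\<dots> \<le> s powr (-a) * (K / ((1 + x) * Q))"
    using bound by (intro mult_left_mono) auto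
  also have "\<dots> = K * s powr (1/2 - a) * arctan_kernel b s t"
    unfolding mult.assoc kernel by simp
  finally show "t powr (-a) * (if s \<le> t then 1 else s\<^sup>2 / t\<^sup>2) * exp (- (b\<^sup>2 * (t - s)\<^sup>2 / t))
      \<le> K * s powr (1/2 - a) * arctan_kernel b s t" .
qed

definition reduced_integrand :: "real \<Rightarrow> real \<Rightarrow> (real \<Rightarrow> real) \<Rightarrow> real \<Rightarrow> real \<Rightarrow> real" where
  "reduced_integrand a b f s t = t powr (-a) * f t * exp (- (b\<^sup>2 * (t - s)\<^sup>2 / t))"

lemma integrandA1_eq_reduced:
  assumes b: "0 < b" and c: "0 < c" and r: "0 < r" and t: "0 < t"
  shows "integrandA1 a b c f r t = exp (- (2 * b / c * r)) * reduced_integrand a b f (r / (b * c)) t"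
proof -
  have "- (b\<^sup>2 * t) - r\<^sup>2 / (c\<^sup>2 * t) = - (2 * b / c * r) - b\<^sup>2 * (t - r / (b * c))\<^sup>2 / t"
    using b c r t by (simp add: field_simps power2_eq_square)
  then have "exp (- (b\<^sup>2 * t)) * exp (- (r\<^sup>2 / (c\<^sup>2 * t)))
      = exp (- (2 * b / c * r)) * exp (- (b\<^sup>2 * (t - r / (b * c))\<^sup>2 / t))"
    by (simp add: exp_add[symmetric])
  then show ?thesis
    unfolding integrandA1_def reduced_integrand_def by (simp add: ac_simps)
qed

lemma FA1_eq_reduced:
  assumes b: "0 < b" and c: "0 < c" and r: "0 < r"
  shows "set_integrable lborel {0<..} (integrandA1 a b c f r)
      \<longleftrightarrow> set_integrable lborel {0<..} (reduced_integrand a b f (r / (b * c)))"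
    and "FA1 a b c f r = exp (- (2 * b / c * r)) * (LBINT t:{0<..}. reduced_integrand a b f (r / (b * c)) t)"
proof -
  define g where "g = (\<lambda>t. exp (- (2 * b / c * r)) * reduced_integrand a b f (r / (b * c)) t)"
  have eq: "\<forall>t. t \<in> {0<..} \<longrightarrow> integrandA1 a b c f r t = g t"
    using integrandA1_eq_reduced[OF b c r] by (simp add: g_def)
  show "set_integrable lborel {0<..} (integrandA1 a b c f r)
      \<longleftrightarrow> set_integrable lborel {0<..} (reduced_integrand a b f (r / (b * c)))"
    using set_integrable_cong[of lborel lborel "{0<..}" "{0<..}" "integrandA1 a b c f r" g] eq
    by (simp add: g_def)
  show "FA1 a b c f r = exp (- (2 * b / c * r)) * (LBINT t:{0<..}. reduced_integrand a b f (r / (b * c)) t)"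
  proof -
    have "FA1 a b c f r = (LBINT t:{0<..}. g t)"
      unfolding FA1_def by (rule set_lebesgue_integral_cong) (use eq in simp_all)
    then show ?thesis by (simp add: g_def)
  qed
qed

lemma borel_measurable_antimono_on_pos:
  fixes f :: "real \<Rightarrow> real"
  assumes "\<forall>s t. 0 < s \<longrightarrow> s \<le> t \<longrightarrow> f t \<le> f s"
  shows "f \<in> borel_measurable (restrict_space lborel {0<..})"
proof -
  have "mono_on {0<..} (\<lambda>x. - f x)" using assms by (auto simp: mono_on_def)
  then have "(\<lambda>x. - (- f x)) \<in> borel_measurable (restrict_space borel {0<..})"
    by (intro borel_measurable_uminus borel_measurable_mono_on_fnc)
  then show ?thesis
    by (simp cong: measurable_cong_sets[OF sets_restrict_space_cong[OF sets_lborel] refl])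
qed

lemma reduced_integrand_measurable:
  assumes "\<forall>s t. 0 < s \<longrightarrow> s \<le> t \<longrightarrow> f t \<le> f s"
  shows "set_borel_measurable lborel {0<..} (reduced_integrand a b f s)"
  unfolding set_borel_measurable_def
proof (subst borel_measurable_restrict_space_iff[symmetric])
  show "{0::real<..} \<inter> space lborel \<in> sets lborel" by simp
  show "reduced_integrand a b f s \<in> borel_measurable (restrict_space lborel {0<..})"
    unfolding reduced_integrand_def
    by (intro borel_measurable_times measurable_restrict_space1
        borel_measurable_antimono_on_pos[OF assms]) measurable
qed

lemma le_of_antimono_and_square_mono:
  fixes f :: "real \<Rightarrow> real"
  assumes f_noninc: "\<forall>s t. 0 < s \<longrightarrow> s \<le> t \<longrightarrow> f t \<le> f s"
    and t2f_nondec: "\<forall>s t. 0 < s \<longrightarrow> s \<le> t \<longrightarrow> s\<^sup>2 * f s \<le> t\<^sup>2 * f t"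
    and s: "0 < s" and t: "0 < t"
  shows "f t \<le> f s * (if s \<le> t then 1 else s\<^sup>2 / t\<^sup>2)"
proof (cases "s \<le> t")
  case False
  then have "t\<^sup>2 * f t \<le> s\<^sup>2 * f s" using t2f_nondec t by simp
  then show ?thesis using False t by (simp add: field_simps)
qed (use f_noninc s in simp)

lemma reduced_integral_upper:
  fixes f :: "real \<Rightarrow> real"
  assumes f_pos: "\<forall>t>0. f t > 0"
    and f_noninc: "\<forall>s t. 0 < s \<longrightarrow> s \<le> t \<longrightarrow> f t \<le> f s"
    and t2f_nondec: "\<forall>s t. 0 < s \<longrightarrow> s \<le> t \<longrightarrow> s\<^sup>2 * f s \<le> t\<^sup>2 * f t"
    and a: "0 \<le> a" and b: "0 < b" and L: "0 < L"
  obtains C where "0 < C" and "\<And>s. 0 < s \<Longrightarrow> L \<le> b\<^sup>2 * s \<Longrightarrow>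
    set_integrable lborel {0<..} (reduced_integrand a b f s) \<and>
    (LBINT t:{0<..}. reduced_integrand a b f s t) \<le> C * (s powr (1/2 - a) * f s)"
proof -
  obtain K where K: "0 < K" and dominate: "\<And>s t. 0 < s \<Longrightarrow> 0 < t \<Longrightarrow> L \<le> b\<^sup>2 * s \<Longrightarrow>
    t powr (-a) * (if s \<le> t then 1 else s\<^sup>2 / t\<^sup>2) * exp (- (b\<^sup>2 * (t - s)\<^sup>2 / t))
      \<le> K * s powr (1/2 - a) * arctan_kernel b s t"
    using gauss_factor_le_arctan_kernel[OF a b L] by blast
  have "set_integrable lborel {0<..} (reduced_integrand a b f s) \<and>
    (LBINT t:{0<..}. reduced_integrand a b f s t) \<le> K * pi / b * (s powr (1/2 - a) * f s)"
    if s: "0 < s" and l: "L \<le> b\<^sup>2 * s" for s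
  proof -
    define G where "G t = K * f s * s powr (1/2 - a) * arctan_kernel b s t" for t
    have G: "set_integrable lborel {0<..} G" "(LBINT t:{0<..}. G t) = K * pi / b * (s powr (1/2 - a) * f s)"
      using arctan_kernel_integral[OF b s] unfolding G_def by (auto simp: ac_simps)
    have bound: "0 \<le> reduced_integrand a b f s t \<and> reduced_integrand a b f s t \<le> G t" if t: "0 < t" for t
    proof -
      have "reduced_integrand a b f s t
          \<le> t powr (-a) * (f s * (if s \<le> t then 1 else s\<^sup>2 / t\<^sup>2)) * exp (- (b\<^sup>2 * (t - s)\<^sup>2 / t))"
        unfolding reduced_integrand_def
        using le_of_antimono_and_square_mono[OF f_noninc t2f_nondec s t]
        by (intro mult_right_mono mult_left_mono) auto
      also have "\<dots> = f s * (t powr (-a) * (if s \<le> t then 1 else s\<^sup>2 / t\<^sup>2) * exp (- (b\<^sup>2 * (t - s)\<^sup>2 / t)))"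
        by (simp only: ac_simps)
      also have "\<dots> \<le> f s * (K * s powr (1/2 - a) * arctan_kernel b s t)"
        using dominate[OF s t l] f_pos s by (intro mult_left_mono) auto
      moreover have "0 \<le> reduced_integrand a b f s t"
        using f_pos t unfolding reduced_integrand_def by (simp add: less_imp_le)
      ultimately show ?thesis by (simp add: G_def ac_simps)
    qed
    have int: "set_integrable lborel {0<..} (reduced_integrand a b f s)"
      using bound
      by (intro set_integrable_bound[OF G(1) reduced_integrand_measurable[OF f_noninc]] AE_I2)
        (force simp: abs_of_nonneg)
    have "(LBINT t:{0<..}. reduced_integrand a b f s t) \<le> (LBINT t:{0<..}. G t)"
      using int G(1) bound by (intro set_integral_mono) auto
    then show ?thesis using int G(2) by simp
  qed
  then show thesis using that[of "K * pi / b"] K b by simp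
qed

lemma reduced_integrable:
  fixes f :: "real \<Rightarrow> real"
  assumes f_pos: "\<forall>t>0. f t > 0"
    and f_noninc: "\<forall>s t. 0 < s \<longrightarrow> s \<le> t \<longrightarrow> f t \<le> f s"
    and t2f_nondec: "\<forall>s t. 0 < s \<longrightarrow> s \<le> t \<longrightarrow> s\<^sup>2 * f s \<le> t\<^sup>2 * f t"
    and a: "0 \<le> a" and b: "0 < b" and s: "0 < s"
  shows "set_integrable lborel {0<..} (reduced_integrand a b f s)"
proof -
  have "0 < b\<^sup>2 * s" using b s by simp
  from reduced_integral_upper[OF f_pos f_noninc t2f_nondec a b this] s show ?thesis by blast
qed

lemma reduced_integrand_lower:
  fixes f :: "real \<Rightarrow> real"
  assumes f_pos: "\<forall>t>0. f t > 0"
    and t2f_nondec: "\<forall>s t. 0 < s \<longrightarrow> s \<le> t \<longrightarrow> s\<^sup>2 * f s \<le> t\<^sup>2 * f t"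
    and a: "0 \<le> a" and b: "0 < b" and L: "0 < L" and s: "0 < s" and l: "L \<le> b\<^sup>2 * s"
    and st: "s \<le> t" and ts: "t \<le> s + sqrt s / b"
  shows "(1 + 1 / sqrt L) powr (-a) / (1 + 1 / sqrt L)\<^sup>2 * exp (-1) * (s powr (-a) * f s)
    \<le> reduced_integrand a b f s t"
proof -
  define D where "D = 1 + 1 / sqrt L"
  have D: "1 \<le> D" using L by (simp add: D_def)
  have t: "0 < t" using s st by linarith
  have "sqrt L \<le> sqrt (b\<^sup>2 * s)" using l by simp
  also have "\<dots> = b * sqrt s" using b by (simp add: real_sqrt_mult)
  finally have "sqrt s * sqrt L \<le> sqrt s * (b * sqrt s)" by (rule mult_left_mono) (use s in simp)
  then have "sqrt s / b \<le> s / sqrt L"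
    using L b s by (simp add: field_simps)
  then have tD: "t \<le> D * s" using ts by (simp add: D_def algebra_simps)
  have gauss: "exp (-1) \<le> exp (- (b\<^sup>2 * (t - s)\<^sup>2 / t))"
  proof -
    have "(t - s)\<^sup>2 \<le> (sqrt s / b)\<^sup>2" using st ts by (intro power_mono) auto
    then have "b\<^sup>2 * (t - s)\<^sup>2 \<le> s" using b s by (simp add: power_divide field_simps)
    then show ?thesis using st t by (simp add: divide_le_eq)
  qed
  have power: "D powr (-a) * s powr (-a) \<le> t powr (-a)"
    using powr_mono2'[of "-a" t "D * s"] tD t a by (simp add: powr_mult)
  have "f s / D\<^sup>2 \<le> f s * s\<^sup>2 / t\<^sup>2"
  proof -
    have "t\<^sup>2 \<le> D\<^sup>2 * s\<^sup>2" using tD t by (metis power_mono power_mult_distrib less_imp_le)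
    then show ?thesis using f_pos s t D by (simp add: field_simps mult_left_mono)
  qed
  also have "\<dots> \<le> f t" using t2f_nondec s st t by (simp add: divide_le_eq ac_simps)
  finally have decay: "f s / D\<^sup>2 \<le> f t" .
  have "D powr (-a) * s powr (-a) * (f s / D\<^sup>2) * exp (-1)
      \<le> t powr (-a) * f t * exp (- (b\<^sup>2 * (t - s)\<^sup>2 / t))"
    using power decay gauss f_pos s t D by (intro mult_mono) (auto simp: less_imp_le)
  then show ?thesis unfolding reduced_integrand_def D_def[symmetric] by (simp add: ac_simps)
qed

lemma reduced_integral_lower:
  fixes f :: "real \<Rightarrow> real"
  assumes f_pos: "\<forall>t>0. f t > 0"
    and t2f_nondec: "\<forall>s t. 0 < s \<longrightarrow> s \<le> t \<longrightarrow> s\<^sup>2 * f s \<le> t\<^sup>2 * f t"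
    and a: "0 \<le> a" and b: "0 < b" and L: "0 < L" and s: "0 < s" and l: "L \<le> b\<^sup>2 * s"
    and int: "set_integrable lborel {0<..} (reduced_integrand a b f s)"
  shows "(1 + 1 / sqrt L) powr (-a) / (1 + 1 / sqrt L)\<^sup>2 * exp (-1) / b * (s powr (1/2 - a) * f s)
    \<le> (LBINT t:{0<..}. reduced_integrand a b f s t)"
proof -
  define k where "k = (1 + 1 / sqrt L) powr (-a) / (1 + 1 / sqrt L)\<^sup>2 * exp (-1) * (s powr (-a) * f s)"
  define I where "I = {s..s + sqrt s / b}"
  have I: "I \<subseteq> {0<..}" using s by (auto simp: I_def)
  have restrict: "(\<lambda>t. indicator {0<..} t *\<^sub>R (k * indicator I t)) = (\<lambda>t. k * indicator I t)"
    using I by (auto simp: fun_eq_iff indicator_def)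
  have h: "set_integrable lborel {0<..} (\<lambda>t. k * indicator I t)"
    unfolding set_integrable_def restrict
    by (intro integrable_mult_right) (auto simp: I_def emeasure_lborel_Icc_eq)
  have "k * (sqrt s / b) = (LBINT t:{0<..}. k * indicator I t)"
    unfolding set_lebesgue_integral_def restrict using s b by (simp add: I_def)
  also have "\<dots> \<le> (LBINT t:{0<..}. reduced_integrand a b f s t)"
  proof (rule set_integral_mono[OF h int])
    fix t :: real assume t: "t \<in> {0<..}"
    show "k * indicator I t \<le> reduced_integrand a b f s t"
    proof (cases "t \<in> I")
      case True
      then show ?thesis
        using reduced_integrand_lower[OF f_pos t2f_nondec a b L s l] by (simp add: I_def k_def)
    next
      case False
      have "0 \<le> reduced_integrand a b f s t"
        using f_pos t unfolding reduced_integrand_def by (simp add: less_imp_le)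
      then show ?thesis using False by simp
    qed
  qed
  finally show ?thesis
    using s by (simp add: k_def powr_half_minus_eq ac_simps)
qed

lemma reduced_integral_asymp:
  fixes f :: "real \<Rightarrow> real"
  assumes f_pos: "\<forall>t>0. f t > 0"
    and f_noninc: "\<forall>s t. 0 < s \<longrightarrow> s \<le> t \<longrightarrow> f t \<le> f s"
    and t2f_nondec: "\<forall>s t. 0 < s \<longrightarrow> s \<le> t \<longrightarrow> s\<^sup>2 * f s \<le> t\<^sup>2 * f t"
    and a: "0 \<le> a" and b: "0 < b" and L: "0 < L"
  obtains C1 C2 where "0 < C1" and "0 < C2" and "\<And>s. 0 < s \<Longrightarrow> L \<le> b\<^sup>2 * s \<Longrightarrow>
    C1 * (s powr (1/2 - a) * f s) \<le> (LBINT t:{0<..}. reduced_integrand a b f s t) \<and>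
    (LBINT t:{0<..}. reduced_integrand a b f s t) \<le> C2 * (s powr (1/2 - a) * f s)"
proof -
  obtain C where "0 < C" and upper: "\<And>s. 0 < s \<Longrightarrow> L \<le> b\<^sup>2 * s \<Longrightarrow>
      set_integrable lborel {0<..} (reduced_integrand a b f s) \<and>
      (LBINT t:{0<..}. reduced_integrand a b f s t) \<le> C * (s powr (1/2 - a) * f s)"
    using reduced_integral_upper[OF f_pos f_noninc t2f_nondec a b L] by blast
  have "0 < 1 + 1 / sqrt L" using L by (intro add_pos_pos) auto
  then have "0 < (1 + 1 / sqrt L) powr (-a) / (1 + 1 / sqrt L)\<^sup>2 * exp (-1) / b" using b by simp
  then show thesis
    using that upper reduced_integral_lower[OF f_pos t2f_nondec a b L] \<open>0 < C\<close> by blast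
qed

theorem lemmaA1:
  fixes f :: "real \<Rightarrow> real" and a b c :: real
  assumes f_pos: "\<forall>t>0. f t > 0"
    and f_noninc: "\<forall>s t. 0 < s \<longrightarrow> s \<le> t \<longrightarrow> f t \<le> f s"
    and a: "a \<ge> 0" and b: "b > 0" and c: "c > 0"
    and t2f_nondec: "\<forall>s t. 0 < s \<longrightarrow> s \<le> t \<longrightarrow> s\<^sup>2 * f s \<le> t\<^sup>2 * f t"
  shows "(\<forall>r>0. set_integrable lborel {0<..} (integrandA1 a b c f r)) \<and>
    (\<exists>C1 C2. C1 > 0 \<and> C2 > 0 \<and>
      (\<forall>r\<ge>1. C1 * (r powr (-a + 1/2) * f (r / (b * c)) * exp (- (2 * b / c * r))) \<le> FA1 a b c f r \<and>
               FA1 a b c f r \<le> C2 * (r powr (-a + 1/2) * f (r / (b * c)) * exp (- (2 * b / c * r)))))"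
proof -
  have integrable: "\<forall>r>0. set_integrable lborel {0<..} (integrandA1 a b c f r)"
    using FA1_eq_reduced(1) reduced_integrable[OF f_pos f_noninc t2f_nondec a b] b c by simp
  have L: "0 < b / c" using b c by simp
  obtain C1 C2 where C: "0 < C1" "0 < C2" and asymp: "\<And>s. 0 < s \<Longrightarrow> b / c \<le> b\<^sup>2 * s \<Longrightarrow>
      C1 * (s powr (1/2 - a) * f s) \<le> (LBINT t:{0<..}. reduced_integrand a b f s t) \<and>
      (LBINT t:{0<..}. reduced_integrand a b f s t) \<le> C2 * (s powr (1/2 - a) * f s)"
    using reduced_integral_asymp[OF f_pos f_noninc t2f_nondec a b L] by blast
  define M where "M = (b * c) powr (1/2 - a)"
  have M: "0 < M" using b c by (simp add: M_def)
  have "C1 / M * (r powr (-a + 1/2) * f (r / (b * c)) * exp (- (2 * b / c * r))) \<le> FA1 a b c f r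
      \<and> FA1 a b c f r \<le> C2 / M * (r powr (-a + 1/2) * f (r / (b * c)) * exp (- (2 * b / c * r)))"
    if r: "1 \<le> r" for r
  proof -
    define s where "s = r / (b * c)"
    have s: "0 < s" and "b / c \<le> b\<^sup>2 * s"
      using r b c by (simp_all add: s_def power2_eq_square field_simps)
    note asymp = asymp[OF this]
    have "r powr (-a + 1/2) / M = s powr (1/2 - a)"
      using r b c by (simp add: M_def s_def powr_divide)
    then have "K / M * (r powr (-a + 1/2) * f s * exp (- (2 * b / c * r)))
        = exp (- (2 * b / c * r)) * (K * (s powr (1/2 - a) * f s))" for K
      using M by (simp add: field_simps)
    then show ?thesis
      using FA1_eq_reduced(2)[OF b c] r asymp by (simp add: s_def[symmetric])
  qed
  then show ?thesis using integrable C M by (intro conjI exI[of _ "C1 / M"] exI[of _ "C2 / M"]) auto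
qed

end
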